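(* Let $K\subseteq\mathbb{R}^n$ be a proper cone and let $A\in\mathbb{R}^{n\times n}$ be $K$-monotone. Let $A=U-V$ be a $K$-regular splitting. Let $U=F-G=\overline{F}-\overline{G}$ be two $K$-weak regular splittings of type II of $U$ such that $VF^{-1}G=GF^{-1}V$ and $V\overline{F}^{-1}\overline{G}=\overline{G}\,\overline{F}^{-1}V$. For a positive integer $s$ define $$T_{s}=(F^{-1}G)^{s}+\sum_{j=0}^{s-1}(F^{-1}G)^{j}F^{-1}V,\qquad \overline{T}_{s}=(\overline{F}^{-1}\overline{G})^{s}+\sum_{j=0}^{s-1}(\overline{F}^{-1}\overline{G})^{j}\overline{F}^{-1}V,$$ $$\widehat{\overline{T}}_{s}=(\overline{G}\,\overline{F}^{-1})^{s}+\sum_{j=0}^{s-1}(\overline{G}\,\overline{F}^{-1})^{j}V\overline{F}^{-1},$$ and let $\overline{P}_s$ be the matrix with $\overline{P}_s^{-1}=\sum_{j=0}^{s-1}(\overline{F}^{-1}\overline{G})^j\overline{F}^{-1}$. Suppose that (i) $\widehat{\overline{T}}_s\overline{P}_s\geq_K 0$ for every positive integer $s$, (ii) $F^{-1}\geq_K\overline{F}^{-1}$, (iii) $\overline{F}^{-1}\overline{G}\geq_K 0$. Then $\rho(T_s)\leq\rho(\overline{T}_s)<1$.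
   Context: A proper cone $K\subseteq\mathbb{R}^n$ is a closed, convex, pointed, solid cone. For $M\in\mathbb{R}^{n\times n}$, $M\geq_K 0$ means $MK\subseteq K$, and $M\geq_K N$ means $M-N\geq_K0$. A matrix $A$ is $K$-monotone if $A$ is nonsingular and $A^{-1}\geq_K 0$. A splitting $A=U-V$ (with $U$ nonsingular) is $K$-regular if $U^{-1}\geq_K 0$ and $V\geq_K 0$; it is a $K$-weak regular splitting of type II if $U^{-1}\geq_K 0$ and $VU^{-1}\geq_K 0$. $\rho$ denotes spectral radius. *)

theory Defs
  imports "HOL-Analysis.Analysis"
begin

definition proper_cone :: "(real ^ 'n) set \<Rightarrow> bool" where
  "proper_cone K \<longleftrightarrow> cone K \<and> convex K \<and> closed K \<and>
     K \<inter> uminus ` K = {0} \<and> interior K \<noteq> {}"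

definition K_nonneg :: "(real ^ 'n) set \<Rightarrow> real ^ 'n ^ 'n \<Rightarrow> bool" where
  "K_nonneg K M \<longleftrightarrow> (\<forall>x\<in>K. M *v x \<in> K)"

definition K_ge :: "(real ^ 'n) set \<Rightarrow> real ^ 'n ^ 'n \<Rightarrow> real ^ 'n ^ 'n \<Rightarrow> bool" where
  "K_ge K M N \<longleftrightarrow> K_nonneg K (M - N)"

definition K_monotone :: "(real ^ 'n) set \<Rightarrow> real ^ 'n ^ 'n \<Rightarrow> bool" where
  "K_monotone K A \<longleftrightarrow> invertible A \<and> K_nonneg K (matrix_inv A)"

definition K_regular_splitting ::
  "(real ^ 'n) set \<Rightarrow> real ^ 'n ^ 'n \<Rightarrow> real ^ 'n ^ 'n \<Rightarrow> real ^ 'n ^ 'n \<Rightarrow> bool" where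
  "K_regular_splitting K A U V \<longleftrightarrow> A = U - V \<and> invertible U \<and>
     K_nonneg K (matrix_inv U) \<and> K_nonneg K V"

definition K_weak_regular_splitting_II ::
  "(real ^ 'n) set \<Rightarrow> real ^ 'n ^ 'n \<Rightarrow> real ^ 'n ^ 'n \<Rightarrow> real ^ 'n ^ 'n \<Rightarrow> bool" where
  "K_weak_regular_splitting_II K A U V \<longleftrightarrow> A = U - V \<and> invertible U \<and>
     K_nonneg K (matrix_inv U) \<and> K_nonneg K (V ** matrix_inv U)"

fun matpow :: "'a::semiring_1 ^ 'n ^ 'n \<Rightarrow> nat \<Rightarrow> 'a ^ 'n ^ 'n" where
  "matpow M 0 = mat 1"
| "matpow M (Suc k) = matpow M k ** M"

definition complexify :: "real ^ 'n ^ 'n \<Rightarrow> complex ^ 'n ^ 'n" where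
  "complexify M = (\<chi> i j. complex_of_real (M $ i $ j))"

definition eigenvalues_C :: "real ^ 'n ^ 'n \<Rightarrow> complex set" where
  "eigenvalues_C M = {c. det (mat c - complexify M) = 0}"

definition spectral_radius :: "real ^ 'n ^ 'n \<Rightarrow> real" where
  "spectral_radius M = Max (cmod ` eigenvalues_C M)"

end

(*
  Write S_s = sum_{j<s} (F^-1 G)^j F^-1 (the paper's P_s^-1) and S'_s for the barred splitting.
  Since S_s U = I - (F^-1 G)^s, the iteration matrices are T_s = I - S_s A and
  Tbar_s = I - S'_s A, and the commutation hypothesis for Fbar, Gbar turns the matrix of (i) into
  I - A S'_s. So (i) says S'_s^-1 - A >=_K 0: A = S'_s^-1 - (S'_s^-1 - A) is a K-regular splitting
  of the K-monotone matrix A, whence rho(Tbar_s) < 1.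

  For the comparison, T_s is similar (via A) to X = I - A S_s >=_K 0, and (ii), (iii) give
  S_s >=_K S'_s, i.e. Tbar_s A^-1 - A^-1 X = S_s - S'_s >=_K 0. Inductively
  0 <=_K A^-1 X^k <=_K Tbar_s^k A^-1, so the powers of X/mu tend to zero whenever those of
  Tbar_s/mu do, and rho(T_s) = rho(X) <= rho(Tbar_s).

  Cone inequalities are turned into norm estimates by a linear functional dominating a multiple
  of the norm on the closed pointed cone K, and limits obtained on K extend to all vectors since
  the solid cone K spans R^n.
*)
theory Submission
  imports Defs "Jordan_Normal_Form.Spectral_Radius"
begin

hide_const (open) Matrix.mat Matrix.vec Spectral_Radius.spectral_radius
no_notation Matrix.vec_index (infixl "$" 100)

section \<open>Matrix algebra\<close>

lemma matrix_add_rdistrib: "((A::'a::semiring_1^'n^'m) + B) ** C = A ** C + B ** C"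
  by (simp add: Finite_Cartesian_Product.vec_eq_iff matrix_matrix_mult_def sum.distrib algebra_simps)

lemma matrix_sub_rdistrib: "((A::'a::ring_1^'n^'m) - B) ** C = A ** C - B ** C"
  by (simp add: Finite_Cartesian_Product.vec_eq_iff matrix_matrix_mult_def sum_subtractf algebra_simps)

lemma matrix_sub_ldistrib: "(A::'a::ring_1^'n^'m) ** (B - C) = A ** B - A ** C"
  by (simp add: Finite_Cartesian_Product.vec_eq_iff matrix_matrix_mult_def sum_subtractf algebra_simps)

lemma matrix_sum_ldistrib: "(A::'a::semiring_1^'n^'m) ** sum f S = (\<Sum>i\<in>S. A ** f i)"
  by (induction S rule: infinite_finite_induct) (simp_all add: matrix_add_ldistrib)

lemma matrix_sum_rdistrib: "sum f S ** (A::'a::semiring_1^'n^'m) = (\<Sum>i\<in>S. f i ** A)"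
  by (induction S rule: infinite_finite_induct) (simp_all add: matrix_add_rdistrib)

lemma matrix_vector_mult_sum: "sum f S *v (x::'a::semiring_1^'n) = (\<Sum>i\<in>S. f i *v x)"
  by (induction S rule: infinite_finite_induct) (simp_all add: matrix_vector_mult_add_rdistrib)

lemma mat_matrix_vector_mult: "(mat c :: 'a::semiring_1^'n^'n) *v w = c *s w"
  by (simp add: Finite_Cartesian_Product.vec_eq_iff matrix_vector_mult_def
      Finite_Cartesian_Product.mat_def if_distrib if_distribR
      sum.delta' cong: if_cong)

lemma matrix_inv_right: "invertible (M::'a::semiring_1^'n^'n) \<Longrightarrow> M ** matrix_inv M = mat 1"
  and matrix_inv_left: "invertible (M::'a::semiring_1^'n^'n) \<Longrightarrow> matrix_inv M ** M = mat 1"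
  unfolding invertible_def matrix_inv_def by (metis (mono_tags, lifting) someI_ex)+

lemma matrix_inv_unique:
  assumes "(M::'a::semiring_1^'n^'n) ** N = mat 1" and "N ** M = mat 1"
  shows "matrix_inv M = N"
proof -
  have "invertible M" using assms unfolding invertible_def by blast
  then have "matrix_inv M = matrix_inv M ** (M ** N)" using assms(1) by simp
  also have "\<dots> = N" by (simp add: matrix_mul_assoc matrix_inv_left \<open>invertible M\<close>)
  finally show ?thesis .
qed

lemma matrix_inv_matrix_inv:
  "invertible (M::'a::semiring_1^'n^'n) \<Longrightarrow> matrix_inv (matrix_inv M) = M"
  by (simp add: matrix_inv_unique matrix_inv_left matrix_inv_right)

lemma invertible_matrix_inv: "invertible (M::'a::semiring_1^'n^'n) \<Longrightarrow> invertible (matrix_inv M)"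
  unfolding invertible_def by (metis matrix_inv_left matrix_inv_right invertible_def)

lemma invertible_iff_ker_trivial:
  "invertible (M::'a::field^'n^'n) \<longleftrightarrow> (\<forall>x. M *v x = 0 \<longrightarrow> x = 0)"
  by (simp add: invertible_left_inverse matrix_left_invertible_ker)

lemma matpow_intertwine:
  assumes "P ** Q = Q ** (R::'a::semiring_1^'n^'n)"
  shows "matpow P j ** Q = Q ** matpow R j"
proof (induction j)
  case (Suc j)
  have "matpow P (Suc j) ** Q = (matpow P j ** Q) ** R"
    using assms by (simp flip: matrix_mul_assoc)
  then show ?case using Suc by (simp add: matrix_mul_assoc)
qed simp

lemma matpow_commute: "(X::'a::semiring_1^'n^'n) ** matpow X k = matpow X k ** X"
  using matpow_intertwine[of X X X k] by simp

lemma matpow_add: "matpow (X::'a::semiring_1^'n^'n) (a + b) = matpow X a ** matpow X b"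
  by (induction b) (simp_all add: matrix_mul_assoc)

lemma matpow_scaleR: "matpow (t *\<^sub>R (M::real^'n^'n)) k = (t ^ k) *\<^sub>R matpow M k"
  by (induction k) (simp_all add: matrix_scalar_ac scalar_matrix_assoc[symmetric] mult.commute)

lemma sum_matpow_telescope_right:
  "(\<Sum>j<m. matpow (X::'a::ring_1^'n^'n) j ** (mat 1 - X)) = mat 1 - matpow X m"
  by (induction m) (simp_all add: matrix_sub_ldistrib)

lemma sum_matpow_telescope_left:
  "(\<Sum>j<m. (mat 1 - (X::'a::ring_1^'n^'n)) ** matpow X j) = mat 1 - matpow X m"
  by (induction m) (simp_all add: matrix_sub_rdistrib matpow_commute)

section \<open>Proper cones\<close>

lemma convex_cone_if_proper_cone: "proper_cone K \<Longrightarrow> convex_cone K"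
  unfolding proper_cone_def convex_cone_def conic_def cone_def using interior_subset by blast

lemma proper_cone_pointed:
  assumes "proper_cone K" "x \<in> K" "- x \<in> K" shows "x = 0"
proof -
  have "x \<in> uminus ` K" using assms(3) by (rule rev_image_eqI) simp
  then show ?thesis using assms(1,2) unfolding proper_cone_def by blast
qed

lemma proper_cone_sum:
  "proper_cone K \<Longrightarrow> (\<And>i. i \<in> S \<Longrightarrow> f i \<in> K) \<Longrightarrow> sum f S \<in> K"
  by (induction S rule: infinite_finite_induct)
    (simp_all add: convex_cone_if_proper_cone convex_cone_contains_0 convex_cone_add)

lemma proper_cone_diff_decomposition:
  assumes K: "proper_cone K"
  obtains p q where "p \<in> K" "q \<in> K" "y = p - q"
proof -
  obtain x0 where "x0 \<in> interior K" using K unfolding proper_cone_def by blast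
  then obtain e where e: "e > 0" "ball x0 e \<subseteq> K"
    by (auto simp: mem_interior)
  have n: "norm y + 1 > 0" by (simp add: add_nonneg_pos)
  define t where "t = e / (norm y + 1)"
  have t: "t > 0" using e n by (simp add: t_def)
  have "t * norm y < t * (norm y + 1)" using t by simp
  also have "\<dots> = e" using n by (simp add: t_def)
  finally have "x0 + t *\<^sub>R y \<in> ball x0 e" using t by (simp add: dist_norm)
  then have "x0 + t *\<^sub>R y \<in> K" "x0 \<in> K" using e by auto
  then have "(1/t) *\<^sub>R (x0 + t *\<^sub>R y) \<in> K" "(1/t) *\<^sub>R x0 \<in> K"
    using t convex_cone_scaleR[OF convex_cone_if_proper_cone[OF K]] by simp_all
  moreover have "y = (1/t) *\<^sub>R (x0 + t *\<^sub>R y) - (1/t) *\<^sub>R x0"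
    using t by (simp add: algebra_simps)
  ultimately show ?thesis using that by blast
qed

lemma zero_notin_convex_hull_proper_cone_sphere:
  assumes K: "proper_cone K"
  shows "0 \<notin> convex hull (K \<inter> sphere 0 1)"
proof
  assume "0 \<in> convex hull (K \<inter> sphere 0 1)"
  then obtain s u where s: "finite s" "s \<subseteq> K \<inter> sphere 0 1" "\<forall>x\<in>s. 0 \<le> u x"
    "sum u s = 1" "(\<Sum>v\<in>s. u v *\<^sub>R v) = 0"
    unfolding convex_hull_explicit by blast
  obtain v0 where v0: "v0 \<in> s" "u v0 > 0"
  proof -
    obtain v0 where "v0 \<in> s" "u v0 \<noteq> 0" using s(4) by (metis sum.neutral zero_neq_one)
    then show ?thesis using s(3) by (intro that[of v0]) (auto simp: less_le)
  qed
  have sK: "v \<in> s \<Longrightarrow> u v *\<^sub>R v \<in> K" for v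
    using s(2,3) convex_cone_scaleR[OF convex_cone_if_proper_cone[OF K]] by blast
  have "- (u v0 *\<^sub>R v0) = (\<Sum>v\<in>s - {v0}. u v *\<^sub>R v)"
    using s(1,5) v0(1) by (simp add: sum.remove neg_eq_iff_add_eq_0)
  also have "\<dots> \<in> K" using sK by (intro proper_cone_sum[OF K]) auto
  finally have "u v0 *\<^sub>R v0 = 0" using proper_cone_pointed[OF K sK[OF v0(1)]] by blast
  moreover have "norm v0 = 1" using v0 s(2) by auto
  ultimately show False using v0 by simp
qed

lemma proper_cone_norm_le_inner:
  assumes K: "proper_cone K"
  obtains a b where "b > 0" "\<And>x. x \<in> K \<Longrightarrow> b * norm x \<le> inner a x"
proof -
  let ?C = "convex hull (K \<inter> sphere 0 1)"
  have "closed ?C"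
    using K unfolding proper_cone_def
    by (simp add: closed_Int_compact compact_convex_hull compact_imp_closed)
  then obtain a b where ab: "b > 0" "\<And>x. x \<in> ?C \<Longrightarrow> inner a x > b"
    using separating_hyperplane_closed_0[OF convex_convex_hull _
        zero_notin_convex_hull_proper_cone_sphere[OF K]] by blast
  have "b * norm x \<le> inner a x" if x: "x \<in> K" for x
  proof (cases "x = 0")
    case False
    have "(1 / norm x) *\<^sub>R x \<in> ?C"
      using False x convex_cone_scaleR[OF convex_cone_if_proper_cone[OF K] _ x]
      by (intro hull_inc) simp
    then have "inner a ((1 / norm x) *\<^sub>R x) > b" using ab by blast
    then have "inner a x / norm x > b" by (simp add: divide_inverse_commute)
    then show ?thesis using False by (simp add: pos_less_divide_eq mult.commute)
  qed simp
  then show ?thesis using that ab(1) by blast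
qed

lemma proper_cone_sandwich_tendsto_zero:
  assumes K: "proper_cone K"
    and "\<And>k. p k \<in> K" and "\<And>k. q k - p k \<in> K" and q: "q \<longlonglongrightarrow> 0"
  shows "p \<longlonglongrightarrow> 0"
proof -
  obtain a b where "b > 0" and ab: "\<And>x. x \<in> K \<Longrightarrow> b * norm x \<le> inner a x"
    using proper_cone_norm_le_inner[OF K] by blast
  have "b * norm (p k) \<le> norm a * norm (q k)" for k
  proof -
    have "b * norm (p k) \<le> inner a (p k)" using ab assms(2) by blast
    also have "\<dots> \<le> inner a (q k)"
    proof -
      have "0 \<le> b * norm (q k - p k)" using \<open>b > 0\<close> by simp
      then show ?thesis using ab[OF assms(3)[of k]] by (simp add: inner_diff_right)
    qed
    also have "\<dots> \<le> norm a * norm (q k)" by (rule norm_cauchy_schwarz)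
    finally show ?thesis .
  qed
  then have "\<forall>\<^sub>F k in sequentially. norm (p k) \<le> (norm a / b) * norm (q k)"
    using \<open>b > 0\<close> by (simp add: pos_le_divide_eq mult.commute)
  moreover have "(\<lambda>k. (norm a / b) * norm (q k)) \<longlonglongrightarrow> 0"
    using tendsto_mult_right_zero[OF tendsto_norm_zero[OF q], of "norm a / b"] by simp
  ultimately show ?thesis by (rule Lim_null_comparison)
qed

lemma proper_cone_bounded_series_tendsto_zero:
  assumes K: "proper_cone K"
    and "\<And>k. a k \<in> K" and "\<And>m. B - (\<Sum>k<m. a k) \<in> K"
  shows "a \<longlonglongrightarrow> 0"
proof -
  obtain c b where "b > 0" and cb: "\<And>x. x \<in> K \<Longrightarrow> b * norm x \<le> inner c x"
    using proper_cone_norm_le_inner[OF K] by blast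
  have nonneg: "0 \<le> inner c x" if "x \<in> K" for x
    using cb[OF that] \<open>b > 0\<close> by (meson mult_nonneg_nonneg norm_ge_zero order_trans less_imp_le)
  have "(\<Sum>k<m. inner c (a k)) \<le> inner c B" for m
    using nonneg[OF assms(3)] by (simp add: inner_diff_right inner_sum_right)
  then have "summable (\<lambda>k. inner c (a k))"
    using nonneg assms(2) by (intro summableI_nonneg_bounded) auto
  then have "(\<lambda>k. (1 / b) * inner c (a k)) \<longlonglongrightarrow> 0"
    by (intro tendsto_mult_right_zero summable_LIMSEQ_zero)
  moreover have "\<forall>\<^sub>F k in sequentially. norm (a k) \<le> (1 / b) * inner c (a k)"
    using cb[OF assms(2)] \<open>b > 0\<close> by (simp add: pos_le_divide_eq mult.commute)
  ultimately show ?thesis by (rule Lim_null_comparison[rotated])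
qed

lemma proper_cone_tendsto_zero_everywhere:
  assumes K: "proper_cone K" and "\<And>x. x \<in> K \<Longrightarrow> (\<lambda>k. L k *v x) \<longlonglongrightarrow> 0"
  shows "(\<lambda>k. L k *v y) \<longlonglongrightarrow> 0"
proof -
  obtain p q where "p \<in> K" "q \<in> K" "y = p - q" using proper_cone_diff_decomposition[OF K] .
  then have "(\<lambda>k. L k *v p - L k *v q) \<longlonglongrightarrow> 0 - 0"
    using assms(2) by (intro tendsto_diff) auto
  then show ?thesis using \<open>y = p - q\<close> by (simp add: matrix_vector_mult_diff_distrib)
qed

lemma K_nonneg_mult: "K_nonneg K A \<Longrightarrow> K_nonneg K B \<Longrightarrow> K_nonneg K (A ** B)"
  unfolding K_nonneg_def by (simp add: matrix_vector_mul_assoc[symmetric])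

lemma K_nonneg_one: "K_nonneg K (mat 1)"
  unfolding K_nonneg_def by simp

lemma K_nonneg_matpow: "K_nonneg K X \<Longrightarrow> K_nonneg K (matpow X k)"
  by (induction k) (simp_all add: K_nonneg_one K_nonneg_mult)

lemma K_nonneg_zero: "proper_cone K \<Longrightarrow> K_nonneg K 0"
  unfolding K_nonneg_def by (simp add: convex_cone_contains_0 convex_cone_if_proper_cone)

lemma K_nonneg_add:
  "proper_cone K \<Longrightarrow> K_nonneg K A \<Longrightarrow> K_nonneg K B \<Longrightarrow> K_nonneg K (A + B)"
  unfolding K_nonneg_def
  by (simp add: matrix_vector_mult_add_rdistrib convex_cone_add convex_cone_if_proper_cone)

lemma K_nonneg_sum:
  assumes "proper_cone K" "\<And>i. i \<in> S \<Longrightarrow> K_nonneg K (f i)"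
  shows "K_nonneg K (sum f S)"
  using assms unfolding K_nonneg_def by (simp add: matrix_vector_mult_sum proper_cone_sum)

lemma K_nonneg_scaleR:
  "proper_cone K \<Longrightarrow> 0 \<le> c \<Longrightarrow> K_nonneg K M \<Longrightarrow> K_nonneg K (c *\<^sub>R M)"
  unfolding K_nonneg_def
  by (simp add: scaleR_matrix_vector_assoc[symmetric] convex_cone_scaleR convex_cone_if_proper_cone)

section \<open>Eigenvalues and the spectral radius\<close>

lemma complexify_mult: "complexify (A ** B) = complexify A ** complexify B"
  by (simp add: complexify_def matrix_matrix_mult_def Finite_Cartesian_Product.vec_eq_iff)

lemma complexify_one: "complexify (mat 1) = mat 1"
  by (simp add: complexify_def Finite_Cartesian_Product.mat_def Finite_Cartesian_Product.vec_eq_iff)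

lemma complexify_matpow: "complexify (matpow M k) = matpow (complexify M) k"
  by (induction k) (simp_all add: complexify_one complexify_mult)

lemma complexify_scaleR_mult_vec:
  "complexify (t *\<^sub>R M) *v w = complex_of_real t *s (complexify M *v w)"
  by (simp add: complexify_def matrix_vector_mult_def Finite_Cartesian_Product.vec_eq_iff
      sum_distrib_left mult.assoc)

lemma eigenvalues_C_iff:
  "c \<in> eigenvalues_C M \<longleftrightarrow> (\<exists>w. w \<noteq> 0 \<and> complexify M *v w = c *s w)"
proof -
  have "c \<in> eigenvalues_C M \<longleftrightarrow> \<not> invertible (mat c - complexify M)"
    by (simp add: eigenvalues_C_def invertible_det_nz)
  also have "\<dots> \<longleftrightarrow> (\<exists>w. w \<noteq> 0 \<and> (mat c - complexify M) *v w = 0)"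
    by (auto simp: invertible_iff_ker_trivial)
  also have "\<dots> \<longleftrightarrow> (\<exists>w. w \<noteq> 0 \<and> complexify M *v w = c *s w)"
    by (auto simp: matrix_vector_mult_diff_rdistrib mat_matrix_vector_mult)
  finally show ?thesis .
qed

lemma complexify_matpow_mult_eigenvector:
  assumes "complexify M *v w = c *s w"
  shows "complexify (matpow M k) *v w = c ^ k *s w"
proof (induction k)
  case (Suc k)
  have "complexify (matpow M (Suc k)) *v w = complexify (matpow M k) *v (c *s w)"
    using assms by (simp add: complexify_mult matrix_vector_mul_assoc[symmetric])
  also have "\<dots> = c *s (complexify (matpow M k) *v w)"
    by (simp add: Finite_Cartesian_Product.vec_eq_iff matrix_vector_mult_def sum_distrib_left
        mult.left_commute)
  finally show ?case using Suc by (simp add: mult.commute)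
qed (simp add: complexify_one)

lemma eigenvalues_C_similar:
  fixes P T X :: "real^'n^'n"
  assumes "invertible P" and "P ** T = X ** P"
  shows "eigenvalues_C T = eigenvalues_C X"
proof -
  have sub: "eigenvalues_C T \<subseteq> eigenvalues_C X"
    if "invertible P" "P ** T = X ** P" for P T X :: "real^'n^'n"
  proof
    fix c assume "c \<in> eigenvalues_C T"
    then obtain w where w: "w \<noteq> 0" "complexify T *v w = c *s w"
      using eigenvalues_C_iff by blast
    let ?v = "complexify P *v w"
    have "complexify X *v ?v = complexify (X ** P) *v w"
      by (simp add: complexify_mult matrix_vector_mul_assoc)
    also have "\<dots> = complexify P *v (complexify T *v w)"
      by (simp add: complexify_mult matrix_vector_mul_assoc flip: that(2))
    also have "\<dots> = c *s ?v"
      using w(2) by (simp add: Finite_Cartesian_Product.vec_eq_iff matrix_vector_mult_def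
          sum_distrib_left mult.left_commute)
    finally have "complexify X *v ?v = c *s ?v" .
    moreover have "complexify (matrix_inv P) *v ?v = w"
      by (simp add: matrix_vector_mul_assoc complexify_mult[symmetric] matrix_inv_left[OF that(1)]
          complexify_one)
    then have "?v \<noteq> 0" using w(1) by auto
    ultimately show "c \<in> eigenvalues_C X" using eigenvalues_C_iff by blast
  qed
  have "matrix_inv P ** X = T ** matrix_inv P"
  proof -
    have "matrix_inv P ** X = matrix_inv P ** (X ** P) ** matrix_inv P"
      by (simp add: matrix_mul_assoc[symmetric] matrix_inv_right[OF assms(1)])
    also have "\<dots> = T ** matrix_inv P"
      by (simp add: assms(2)[symmetric] matrix_mul_assoc matrix_inv_left[OF assms(1)])
    finally show ?thesis .
  qed
  then show ?thesis
    using sub[OF assms] sub[OF invertible_matrix_inv[OF assms(1)]] by blast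
qed

text \<open>The spectral theory of the AFP entry Jordan Normal Form (finite nonempty spectrum, bounded
  powers below spectral radius 1) is reached by transporting matrices along a fixed enumeration
  of the finite index type.\<close>

definition enum_idx :: "nat \<Rightarrow> 'n::finite" where
  "enum_idx = (SOME e. bij_betw e {..<CARD('n)} UNIV)"

definition to_jnf_mat :: "'a^'n::finite^'n \<Rightarrow> 'a Matrix.mat" where
  "to_jnf_mat M = Matrix.mat CARD('n) CARD('n) (\<lambda>(i, j). M $ enum_idx i $ enum_idx j)"

definition to_jnf_vec :: "'a^'n::finite \<Rightarrow> 'a Matrix.vec" where
  "to_jnf_vec v = Matrix.vec CARD('n) (\<lambda>i. v $ enum_idx i)"

lemma bij_betw_enum_idx: "bij_betw (enum_idx :: nat \<Rightarrow> 'n::finite) {..<CARD('n)} UNIV"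
proof -
  have "\<exists>e :: nat \<Rightarrow> 'n. bij_betw e {..<CARD('n)} UNIV"
    using ex_bij_betw_nat_finite[of "UNIV :: 'n set"] by (simp add: atLeast0LessThan)
  then show ?thesis unfolding enum_idx_def by (rule someI_ex)
qed

lemma enum_idx_eq_iff:
  "i < CARD('n) \<Longrightarrow> j < CARD('n) \<Longrightarrow> (enum_idx i :: 'n::finite) = enum_idx j \<longleftrightarrow> i = j"
  using bij_betw_enum_idx unfolding bij_betw_def inj_on_def by auto

lemma enum_idx_surj: obtains i where "i < CARD('n)" "(enum_idx i :: 'n::finite) = j"
  using bij_betw_enum_idx unfolding bij_betw_def by (metis UNIV_I imageE lessThan_iff)

lemma sum_enum_idx:
  "(\<Sum>k\<in>{0..<CARD('n)}. h (enum_idx k)) = (\<Sum>j\<in>(UNIV :: 'n::finite set). h j)"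
  using sum.reindex_bij_betw[OF bij_betw_enum_idx, of h] by (simp add: atLeast0LessThan)

lemma to_jnf_mat_carrier: "to_jnf_mat (M :: 'a^'n::finite^'n) \<in> carrier_mat CARD('n) CARD('n)"
  by (simp add: to_jnf_mat_def)

lemma dim_to_jnf [simp]:
  "dim_row (to_jnf_mat (M :: 'a^'n::finite^'n)) = CARD('n)"
  "dim_col (to_jnf_mat (M :: 'a^'n::finite^'n)) = CARD('n)"
  "dim_vec (to_jnf_vec (v :: 'a^'n::finite)) = CARD('n)"
  by (simp_all add: to_jnf_mat_def to_jnf_vec_def)

lemma to_jnf_mat_mult:
  "to_jnf_mat ((M :: 'a::semiring_1^'n::finite^'n) ** N) = to_jnf_mat M * to_jnf_mat N"
  by (rule eq_matI) (auto simp: to_jnf_mat_def scalar_prod_def matrix_matrix_mult_def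
      sum_enum_idx[where h = "\<lambda>k. M $ _ $ k * N $ k $ _"])

lemma to_jnf_mat_one: "to_jnf_mat (mat 1 :: 'a::semiring_1^'n::finite^'n) = 1\<^sub>m CARD('n)"
  by (rule eq_matI) (auto simp: to_jnf_mat_def Finite_Cartesian_Product.mat_def enum_idx_eq_iff)

lemma to_jnf_mat_matpow:
  "to_jnf_mat (matpow (M :: 'a::semiring_1^'n::finite^'n) k) = to_jnf_mat M ^\<^sub>m k"
  by (induction k) (simp_all add: to_jnf_mat_one to_jnf_mat_mult)

lemma to_jnf_mat_mult_vec:
  "to_jnf_mat (B :: 'a::semiring_1^'n::finite^'n) *\<^sub>v to_jnf_vec w = to_jnf_vec (B *v w)"
  by (rule eq_vecI) (auto simp: to_jnf_mat_def to_jnf_vec_def scalar_prod_def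
      matrix_vector_mult_def sum_enum_idx[where h = "\<lambda>k. B $ _ $ k * w $ k"])

lemma to_jnf_vec_smult: "to_jnf_vec (c *s w) = c \<cdot>\<^sub>v to_jnf_vec w"
  by (rule eq_vecI) (auto simp: to_jnf_vec_def)

lemma to_jnf_vec_inj:
  assumes "to_jnf_vec (x :: 'a^'n::finite) = to_jnf_vec y"
  shows "x = y"
proof -
  have "x $ j = y $ j" for j
  proof -
    obtain i where "i < CARD('n)" "enum_idx i = j" by (rule enum_idx_surj)
    then show ?thesis using arg_cong[OF assms, of "\<lambda>v. Matrix.vec_index v i"]
      by (simp add: to_jnf_vec_def)
  qed
  then show ?thesis by (simp add: Finite_Cartesian_Product.vec_eq_iff)
qed

lemma to_jnf_vec_zero: "to_jnf_vec (0 :: 'a::zero^'n::finite) = 0\<^sub>v CARD('n)"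
  by (rule eq_vecI) (simp_all add: to_jnf_vec_def)

lemma to_jnf_vec_surj:
  assumes "v \<in> carrier_vec CARD('n)"
  obtains w :: "'a^'n::finite" where "to_jnf_vec w = v"
proof
  have "inv_into {..<CARD('n)} enum_idx (enum_idx i :: 'n) = i" if "i < CARD('n)" for i
    using that bij_betw_imp_inj_on[OF bij_betw_enum_idx[where 'n = 'n]] by (simp add: inv_into_f_f)
  then show "to_jnf_vec (\<chi> j. Matrix.vec_index v (inv_into {..<CARD('n)} enum_idx j) :: 'a^'n) = v"
    using assms by (intro eq_vecI) (simp_all add: to_jnf_vec_def)
qed

lemma to_jnf_vec_carrier: "to_jnf_vec (v :: 'a^'n::finite) \<in> carrier_vec CARD('n)"
  by (simp add: to_jnf_vec_def)

lemma eigenvalues_C_eq_spectrum: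
  "eigenvalues_C (M :: real^'n::finite^'n) = Spectral_Radius.spectrum (to_jnf_mat (complexify M))"
proof -
  let ?J = "to_jnf_mat (complexify M)"
  have "c \<in> eigenvalues_C M \<longleftrightarrow> (\<exists>v. eigenvector ?J v c)" for c
  proof
    assume "c \<in> eigenvalues_C M"
    then obtain w where w: "w \<noteq> 0" "complexify M *v w = c *s w"
      by (auto simp: eigenvalues_C_iff)
    have "to_jnf_vec w \<noteq> 0\<^sub>v CARD('n)"
    proof
      assume "to_jnf_vec w = 0\<^sub>v CARD('n)"
      then have "w = 0" by (intro to_jnf_vec_inj) (simp add: to_jnf_vec_zero)
      with w(1) show False ..
    qed
    moreover have "?J *\<^sub>v to_jnf_vec w = c \<cdot>\<^sub>v to_jnf_vec w"
      using w(2) by (simp only: to_jnf_mat_mult_vec to_jnf_vec_smult)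
    ultimately have "eigenvector ?J (to_jnf_vec w) c"
      by (simp add: eigenvector_def to_jnf_vec_carrier)
    then show "\<exists>v. eigenvector ?J v c" ..
  next
    assume "\<exists>v. eigenvector ?J v c"
    then obtain v where
      v: "v \<in> carrier_vec CARD('n)" "v \<noteq> 0\<^sub>v CARD('n)" "?J *\<^sub>v v = c \<cdot>\<^sub>v v"
      unfolding eigenvector_def by auto
    obtain w :: "complex^'n" where w: "to_jnf_vec w = v" by (rule to_jnf_vec_surj[OF v(1)])
    have "complexify M *v w = c *s w"
      using v(3) unfolding w[symmetric]
      by (intro to_jnf_vec_inj) (simp only: to_jnf_mat_mult_vec to_jnf_vec_smult)
    moreover have "w \<noteq> 0" using v(2) w to_jnf_vec_zero by auto
    ultimately show "c \<in> eigenvalues_C M" by (auto simp: eigenvalues_C_iff)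
  qed
  then show ?thesis unfolding Spectral_Radius.spectrum_def eigenvalue_def by blast
qed

lemma finite_eigenvalues_C: "finite (eigenvalues_C (M :: real^'n::finite^'n))"
  by (simp add: eigenvalues_C_eq_spectrum card_finite_spectrum(1)[OF to_jnf_mat_carrier])

lemma eigenvalues_C_nonempty: "eigenvalues_C (M :: real^'n::finite^'n) \<noteq> {}"
  by (simp add: eigenvalues_C_eq_spectrum spectrum_non_empty[OF to_jnf_mat_carrier])

lemma spectral_radius_eq_jnf:
  "spectral_radius M = Spectral_Radius.spectral_radius (to_jnf_mat (complexify M))"
  by (simp add: Defs.spectral_radius_def Spectral_Radius.spectral_radius_def eigenvalues_C_eq_spectrum)

lemma eigenvalue_le_spectral_radius: "c \<in> eigenvalues_C M \<Longrightarrow> cmod c \<le> spectral_radius M"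
  unfolding Defs.spectral_radius_def by (simp add: finite_eigenvalues_C)

lemma spectral_radius_nonneg: "0 \<le> spectral_radius M"
  using eigenvalues_C_nonempty eigenvalue_le_spectral_radius norm_ge_zero order_trans by blast

lemma spectral_radius_less_iff:
  "spectral_radius M < r \<longleftrightarrow> (\<forall>c\<in>eigenvalues_C M. cmod c < r)"
  unfolding Defs.spectral_radius_def by (simp add: finite_eigenvalues_C eigenvalues_C_nonempty)

lemma spectral_radius_scaleR:
  assumes "t > 0"
  shows "spectral_radius (t *\<^sub>R M) = t * spectral_radius M"
proof -
  let ?t = "complex_of_real t"
  have iff: "c \<in> eigenvalues_C (t *\<^sub>R M) \<longleftrightarrow> c / ?t \<in> eigenvalues_C M" for c
  proof -
    have "?t *s (complexify M *v w) = c *s w \<longleftrightarrow> complexify M *v w = (c / ?t) *s w" for w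
      using assms by (auto simp: Finite_Cartesian_Product.vec_eq_iff field_simps)
    then show ?thesis by (simp add: eigenvalues_C_iff complexify_scaleR_mult_vec)
  qed
  have "eigenvalues_C (t *\<^sub>R M) = (\<lambda>c. ?t * c) ` eigenvalues_C M"
  proof (intro Set.set_eqI iffI)
    fix c assume "c \<in> eigenvalues_C (t *\<^sub>R M)"
    then have "c / ?t \<in> eigenvalues_C M" using iff by blast
    moreover have "c = ?t * (c / ?t)" using assms by simp
    ultimately show "c \<in> (\<lambda>c. ?t * c) ` eigenvalues_C M" by (rule rev_image_eqI)
  next
    fix c assume "c \<in> (\<lambda>c. ?t * c) ` eigenvalues_C M"
    then obtain d where "d \<in> eigenvalues_C M" "c = ?t * d" by blast
    then show "c \<in> eigenvalues_C (t *\<^sub>R M)" using iff assms by simp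
  qed
  then have "cmod ` eigenvalues_C (t *\<^sub>R M) = (\<lambda>r. t * r) ` (cmod ` eigenvalues_C M)"
    using assms by (simp add: image_image norm_mult)
  moreover have "mono (\<lambda>r::real. t * r)"
    using assms by (auto intro: monoI mult_left_mono)
  ultimately show ?thesis
    unfolding Defs.spectral_radius_def
    by (simp add: mono_Max_commute finite_eigenvalues_C eigenvalues_C_nonempty)
qed

lemma matpow_entries_bounded:
  assumes "spectral_radius (M::real^'n::finite^'n) < 1"
  obtains C where "\<And>k i j. \<bar>matpow M k $ i $ j\<bar> \<le> C"
proof -
  let ?J = "to_jnf_mat (complexify M)"
  obtain C where C: "\<And>k. norm_bound (?J ^\<^sub>m k) C"
    using spectral_radius_jnf_norm_bound_less_1_upper_triangular[OF to_jnf_mat_carrier]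
      assms[unfolded spectral_radius_eq_jnf] by blast
  have "\<bar>matpow M k $ i $ j\<bar> \<le> C" for k i j
  proof -
    obtain a where a: "a < CARD('n)" "enum_idx a = i" by (rule enum_idx_surj)
    obtain b where b: "b < CARD('n)" "enum_idx b = j" by (rule enum_idx_surj)
    have "norm_bound (to_jnf_mat (complexify (matpow M k))) C"
      using C by (simp add: to_jnf_mat_matpow complexify_matpow)
    then have "norm (to_jnf_mat (complexify (matpow M k)) $$ (a, b)) \<le> C"
      using a b unfolding norm_bound_def by simp
    then show ?thesis using a b by (simp add: to_jnf_mat_def complexify_def)
  qed
  then show ?thesis by (rule that)
qed

lemma complexify_mult_vec_nth:
  "(complexify N *v w) $ i = complex_of_real ((N *v (\<chi> j. Re (w $ j))) $ i)
     + \<i> * complex_of_real ((N *v (\<chi> j. Im (w $ j))) $ i)"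
proof -
  have "(complexify N *v w) $ i = (\<Sum>j\<in>UNIV. complex_of_real (N $ i $ j) * w $ j)"
    by (simp add: complexify_def matrix_vector_mult_def)
  also have "\<dots> = (\<Sum>j\<in>UNIV. complex_of_real (N $ i $ j * Re (w $ j))
      + \<i> * complex_of_real (N $ i $ j * Im (w $ j)))"
    by (intro sum.cong refl) (simp add: complex_eq_iff)
  also have "\<dots> = complex_of_real ((N *v (\<chi> j. Re (w $ j))) $ i)
      + \<i> * complex_of_real ((N *v (\<chi> j. Im (w $ j))) $ i)"
    by (simp add: matrix_vector_mult_def sum.distrib sum_distrib_left)
  finally show ?thesis .
qed

lemma spectral_radius_less_1_if_matpow_tendsto_zero:
  assumes "\<And>x. (\<lambda>k. matpow M k *v x) \<longlonglongrightarrow> 0"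
  shows "spectral_radius M < 1"
  unfolding spectral_radius_less_iff
proof
  fix c assume "c \<in> eigenvalues_C M"
  then obtain w where w: "w \<noteq> 0" "complexify M *v w = c *s w" by (auto simp: eigenvalues_C_iff)
  obtain i where wi: "w $ i \<noteq> 0" using w(1) by (metis Finite_Cartesian_Product.vec_eq_iff zero_index)
  have "(\<lambda>k. complex_of_real ((matpow M k *v x) $ i)) \<longlonglongrightarrow> 0" for x
    using tendsto_of_real[OF tendsto_vec_nth[OF assms[of x]], of i] by simp
  then have "(\<lambda>k. (complexify (matpow M k) *v w) $ i) \<longlonglongrightarrow> 0 + \<i> * 0"
    unfolding complexify_mult_vec_nth by (intro tendsto_add tendsto_mult_left)
  then have "(\<lambda>k. c ^ k * w $ i) \<longlonglongrightarrow> 0"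
    by (simp add: complexify_matpow_mult_eigenvector[OF w(2)])
  then have "(\<lambda>k. c ^ k * w $ i * inverse (w $ i)) \<longlonglongrightarrow> 0"
    by (rule tendsto_mult_left_zero)
  then have "(\<lambda>k. norm (c ^ k)) \<longlonglongrightarrow> 0" using wi by (simp add: tendsto_norm_zero)
  show "cmod c < 1"
  proof (rule ccontr)
    assume "\<not> cmod c < 1"
    then have "\<forall>k. 1 \<le> norm (c ^ k)" by (simp add: norm_power one_le_power)
    with \<open>(\<lambda>k. norm (c ^ k)) \<longlonglongrightarrow> 0\<close> have "1 \<le> (0::real)"
      by (intro LIMSEQ_le_const) auto
    then show False by simp
  qed
qed

lemma matpow_tendsto_zero_if_spectral_radius_less_1:
  assumes "spectral_radius (M::real^'n::finite^'n) < 1"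
  shows "(\<lambda>k. matpow M k *v x) \<longlonglongrightarrow> 0"
proof -
  define m where "m = (spectral_radius M + 1) / 2"
  have m: "0 < m" "spectral_radius M < m" "m < 1"
    using assms spectral_radius_nonneg[of M] by (auto simp: m_def)
  define N where "N = (1 / m) *\<^sub>R M"
  have "spectral_radius N < 1"
    using m by (simp add: N_def spectral_radius_scaleR)
  then obtain C where C: "\<And>k i j. \<bar>matpow N k $ i $ j\<bar> \<le> C"
    using matpow_entries_bounded by blast
  define B where "B = real CARD('n) * real CARD('n) * C * norm x"
  have "norm (matpow N k *v x) \<le> B" for k
  proof -
    have "norm (matpow N k *v x) \<le> onorm ((*v) (matpow N k)) * norm x"
      by (rule onorm[OF matrix_vector_mul_bounded_linear])
    also have "\<dots> \<le> B"
      unfolding B_def by (intro mult_right_mono onorm_le_matrix_component C) simp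
    finally show ?thesis .
  qed
  moreover have "M = m *\<^sub>R N" using m by (simp add: N_def)
  then have "matpow M k *v x = m ^ k *\<^sub>R (matpow N k *v x)" for k
    by (simp add: matpow_scaleR scaleR_matrix_vector_assoc)
  ultimately have "\<forall>\<^sub>F k in sequentially. norm (matpow M k *v x) \<le> m ^ k * B"
    using m by (simp add: mult_left_mono)
  moreover have "(\<lambda>k. m ^ k * B) \<longlonglongrightarrow> 0"
    using m by (intro tendsto_mult_left_zero LIMSEQ_power_zero) simp
  ultimately show ?thesis by (rule Lim_null_comparison)
qed

section \<open>Convergence of $K$-nonnegative iterations\<close>

lemma matpow_tendsto_zero_if_bounded_series:
  assumes K: "proper_cone K" and X: "K_nonneg K X" and Z: "K_nonneg K Z"
    and bound: "\<And>m. K_ge K B (\<Sum>k<m. matpow X k ** Z)"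
    and XZW: "X = Z ** W"
  shows "(\<lambda>k. matpow X k *v y) \<longlonglongrightarrow> 0"
proof -
  have "(\<lambda>k. (matpow X k ** Z) *v x) \<longlonglongrightarrow> 0" if "x \<in> K" for x
  proof (rule proper_cone_bounded_series_tendsto_zero[OF K, where B = "B *v x"])
    show "(matpow X k ** Z) *v x \<in> K" for k
      using K_nonneg_mult[OF K_nonneg_matpow[OF X] Z] that by (simp add: K_nonneg_def)
    show "B *v x - (\<Sum>k<m. (matpow X k ** Z) *v x) \<in> K" for m
      using bound[of m] that
      by (simp add: K_ge_def K_nonneg_def matrix_vector_mult_sum matrix_vector_mult_diff_rdistrib)
  qed
  then have "(\<lambda>k. (matpow X k ** Z) *v (W *v y)) \<longlonglongrightarrow> 0"
    by (rule proper_cone_tendsto_zero_everywhere[OF K])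
  moreover have "matpow X (Suc k) *v y = (matpow X k ** Z) *v (W *v y)" for k
    using XZW by (simp add: matrix_vector_mul_assoc matrix_mul_assoc)
  ultimately have "(\<lambda>k. matpow X (Suc k) *v y) \<longlonglongrightarrow> 0" by (simp only:)
  then show ?thesis by (rule LIMSEQ_imp_Suc)
qed

lemma weak_regular_splitting_matpow_tendsto_zero:
  assumes K: "proper_cone K" and A: "K_monotone K A"
    and split: "A = P - N" "invertible P"
    and Pinv: "K_nonneg K (matrix_inv P)" and PinvN: "K_nonneg K (matrix_inv P ** N)"
  shows "(\<lambda>k. matpow (matrix_inv P ** N) k *v x) \<longlonglongrightarrow> 0"
proof (rule matpow_tendsto_zero_if_bounded_series[OF K PinvN Pinv, where B = "matrix_inv A"])
  let ?T = "matrix_inv P ** N"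
  have invA: "invertible A" and Ainv: "K_nonneg K (matrix_inv A)"
    using A unfolding K_monotone_def by auto
  fix m
  have "matrix_inv P ** A = mat 1 - ?T"
    using split by (simp add: matrix_sub_ldistrib matrix_inv_left)
  then have SA: "(\<Sum>k<m. matpow ?T k ** matrix_inv P) ** A = mat 1 - matpow ?T m"
    by (simp add: matrix_sum_rdistrib sum_matpow_telescope_right flip: matrix_mul_assoc)
  have "(\<Sum>k<m. matpow ?T k ** matrix_inv P)
      = (\<Sum>k<m. matpow ?T k ** matrix_inv P) ** A ** matrix_inv A"
    by (simp add: matrix_inv_right[OF invA] flip: matrix_mul_assoc)
  also have "\<dots> = matrix_inv A - matpow ?T m ** matrix_inv A"
    by (simp add: SA matrix_sub_rdistrib)
  finally show "K_ge K (matrix_inv A) (\<Sum>k<m. matpow ?T k ** matrix_inv P)"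
    using K_nonneg_mult[OF K_nonneg_matpow[OF PinvN] Ainv] by (simp add: K_ge_def)
qed (rule refl)

lemma K_regular_splitting_spectral_radius_less_1:
  assumes K: "proper_cone K" and A: "K_monotone K A" and reg: "K_regular_splitting K A P N"
  shows "spectral_radius (matrix_inv P ** N) < 1"
proof -
  have "A = P - N" "invertible P" "K_nonneg K (matrix_inv P)" "K_nonneg K N"
    using reg unfolding K_regular_splitting_def by auto
  then have "(\<lambda>k. matpow (matrix_inv P ** N) k *v x) \<longlonglongrightarrow> 0" for x
    by (intro weak_regular_splitting_matpow_tendsto_zero[OF K A] K_nonneg_mult)
  then show ?thesis by (rule spectral_radius_less_1_if_matpow_tendsto_zero)
qed

lemma invertible_one_minus_matpow:
  assumes "\<And>x. (\<lambda>k. matpow M k *v x) \<longlonglongrightarrow> 0" and "0 < s"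
  shows "invertible (mat 1 - matpow (M::real^'n::finite^'n) s)"
  unfolding invertible_iff_ker_trivial
proof (intro allI impI)
  fix v assume "(mat 1 - matpow M s) *v v = 0"
  then have fixed: "matpow M s *v v = v" by (simp add: matrix_vector_mult_diff_rdistrib)
  have "matpow M (s * m) *v v = v" for m
    by (induction m) (simp_all add: matpow_add fixed flip: matrix_vector_mul_assoc)
  moreover have "(\<lambda>m. matpow M (s * m) *v v) \<longlonglongrightarrow> 0"
    using LIMSEQ_subseq_LIMSEQ[OF assms(1), of "\<lambda>m. s * m"] assms(2)
    by (simp add: strict_mono_def o_def)
  ultimately show "v = 0" by (simp add: LIMSEQ_const_iff)
qed

lemma matpow_K_dominated:
  assumes K: "proper_cone K" and X: "K_nonneg K X" and T: "K_nonneg K T"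
    and dom: "K_ge K (T ** P) (P ** X)"
  shows "K_ge K (matpow T k ** P) (P ** matpow X k)"
proof (induction k)
  case 0
  then show ?case by (simp add: K_ge_def K_nonneg_zero[OF K])
next
  case (Suc k)
  have "matpow T (Suc k) ** P - P ** matpow X (Suc k)
      = (matpow T k ** P - P ** matpow X k) ** X + matpow T k ** (T ** P - P ** X)"
    by (simp add: matrix_sub_ldistrib matrix_sub_rdistrib matrix_mul_assoc)
  then show ?case
    using Suc dom unfolding K_ge_def
    by (simp add: K_nonneg_add[OF K] K_nonneg_mult X K_nonneg_matpow[OF T])
qed

lemma spectral_radius_less_1_if_K_dominated:
  assumes K: "proper_cone K" and P: "invertible P" "K_nonneg K P"
    and X: "K_nonneg K X" and T: "K_nonneg K T" and dom: "K_ge K (T ** P) (P ** X)"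
    and "spectral_radius T < 1"
  shows "spectral_radius X < 1"
proof -
  have "(\<lambda>k. matpow X k *v x) \<longlonglongrightarrow> 0" if "x \<in> K" for x
  proof -
    have "(\<lambda>k. (P ** matpow X k) *v x) \<longlonglongrightarrow> 0"
    proof (rule proper_cone_sandwich_tendsto_zero[OF K])
      show "(P ** matpow X k) *v x \<in> K" for k
        using K_nonneg_mult[OF P(2) K_nonneg_matpow[OF X]] that by (simp add: K_nonneg_def)
      show "matpow T k *v (P *v x) - (P ** matpow X k) *v x \<in> K" for k
        using matpow_K_dominated[OF K X T dom, of k] that
        by (simp add: K_ge_def K_nonneg_def matrix_vector_mult_diff_rdistrib matrix_vector_mul_assoc)
      show "(\<lambda>k. matpow T k *v (P *v x)) \<longlonglongrightarrow> 0"
        using assms(7) by (rule matpow_tendsto_zero_if_spectral_radius_less_1)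
    qed
    then have "(\<lambda>k. matrix_inv P *v ((P ** matpow X k) *v x)) \<longlonglongrightarrow> matrix_inv P *v 0"
      by (intro bounded_linear.tendsto[OF matrix_vector_mul_bounded_linear])
    then show ?thesis
      by (simp add: matrix_vector_mul_assoc matrix_mul_assoc matrix_inv_left[OF P(1)])
  qed
  then have "(\<lambda>k. matpow X k *v y) \<longlonglongrightarrow> 0" for y
    by (rule proper_cone_tendsto_zero_everywhere[OF K])
  then show ?thesis by (rule spectral_radius_less_1_if_matpow_tendsto_zero)
qed

lemma spectral_radius_le_if_K_dominated:
  assumes K: "proper_cone K" and P: "invertible P" "K_nonneg K P"
    and X: "K_nonneg K X" and T: "K_nonneg K T" and dom: "K_ge K (T ** P) (P ** X)"
  shows "spectral_radius X \<le> spectral_radius T"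
proof (rule dense_ge)
  fix \<mu> assume \<mu>: "spectral_radius T < \<mu>"
  then have "\<mu> > 0" using spectral_radius_nonneg[of T] by linarith
  have "spectral_radius ((1 / \<mu>) *\<^sub>R X) < 1"
  proof (rule spectral_radius_less_1_if_K_dominated[OF K P])
    show "K_nonneg K ((1 / \<mu>) *\<^sub>R X)" "K_nonneg K ((1 / \<mu>) *\<^sub>R T)"
      using X T \<open>\<mu> > 0\<close> by (simp_all add: K_nonneg_scaleR[OF K])
    show "K_ge K (((1 / \<mu>) *\<^sub>R T) ** P) (P ** ((1 / \<mu>) *\<^sub>R X))"
      using K_nonneg_scaleR[OF K _ dom[unfolded K_ge_def], of "1 / \<mu>"] \<open>\<mu> > 0\<close>
      by (simp add: K_ge_def matrix_scalar_ac scaleR_diff_right flip: scalar_matrix_assoc)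
    show "spectral_radius ((1 / \<mu>) *\<^sub>R T) < 1"
      using \<mu> \<open>\<mu> > 0\<close> by (simp add: spectral_radius_scaleR)
  qed
  then show "spectral_radius X \<le> \<mu>"
    using \<open>\<mu> > 0\<close> by (simp add: spectral_radius_scaleR)
qed

section \<open>Two-stage splittings\<close>

text \<open>\<open>precond_inv F G s\<close> is the paper's \<open>P\<^sub>s\<^sup>-\<^sup>1\<close>: \<open>s\<close> sweeps of the inner splitting
  \<open>U = F - G\<close> amount to preconditioning with \<open>P\<^sub>s\<close>.\<close>

definition precond_inv :: "real^'n^'n \<Rightarrow> real^'n^'n \<Rightarrow> nat \<Rightarrow> real^'n^'n" where
  "precond_inv F G m = (\<Sum>j<m. matpow (matrix_inv F ** G) j ** matrix_inv F)"

lemma precond_inv_alt: "precond_inv F G m = (\<Sum>j<m. matrix_inv F ** matpow (G ** matrix_inv F) j)"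
  unfolding precond_inv_def by (intro sum.cong refl matpow_intertwine) (simp add: matrix_mul_assoc)

lemma precond_inv_Suc:
  "precond_inv F G (Suc m) = precond_inv F G m + matrix_inv F ** matpow (G ** matrix_inv F) m"
  by (simp add: precond_inv_alt)

lemma precond_inv_Suc_left:
  "precond_inv F G (Suc m) = matrix_inv F + matrix_inv F ** G ** precond_inv F G m"
  unfolding precond_inv_def sum.lessThan_Suc_shift matrix_sum_ldistrib
  by (simp add: matpow_commute matrix_mul_assoc)

lemma precond_inv_mult_splitting:
  assumes "U = F - G" "invertible F"
  shows "precond_inv F G m ** U = mat 1 - matpow (matrix_inv F ** G) m"
proof -
  have "matrix_inv F ** U = mat 1 - matrix_inv F ** G"
    using assms by (simp add: matrix_sub_ldistrib matrix_inv_left)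
  then show ?thesis
    unfolding precond_inv_def
    by (simp add: matrix_sum_rdistrib sum_matpow_telescope_right flip: matrix_mul_assoc)
qed

lemma splitting_mult_precond_inv:
  assumes "U = F - G" "invertible F"
  shows "U ** precond_inv F G m = mat 1 - matpow (G ** matrix_inv F) m"
proof -
  have "U ** matrix_inv F = mat 1 - G ** matrix_inv F"
    using assms by (simp add: matrix_sub_rdistrib matrix_inv_right)
  then show ?thesis
    unfolding precond_inv_alt
    by (simp add: matrix_sum_ldistrib sum_matpow_telescope_left matrix_mul_assoc)
qed

lemma K_nonneg_precond_inv:
  assumes "proper_cone K" and "K_weak_regular_splitting_II K U F G"
  shows "K_nonneg K (precond_inv F G m)"
  using assms unfolding K_weak_regular_splitting_II_def precond_inv_alt
  by (intro K_nonneg_sum) (simp_all add: K_nonneg_mult K_nonneg_matpow)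

lemma invertible_precond_inv:
  assumes K: "proper_cone K" and U: "K_monotone K U"
    and split: "U = F - G" "invertible F"
    and "K_nonneg K (matrix_inv F)" "K_nonneg K (matrix_inv F ** G)" and "0 < m"
  shows "invertible (precond_inv F G m)"
proof -
  have invU: "invertible U" using U unfolding K_monotone_def by simp
  have "precond_inv F G m = precond_inv F G m ** U ** matrix_inv U"
    by (simp add: matrix_inv_right[OF invU] flip: matrix_mul_assoc)
  also have "\<dots> = (mat 1 - matpow (matrix_inv F ** G) m) ** matrix_inv U"
    by (simp add: precond_inv_mult_splitting[OF split])
  finally show ?thesis
    using weak_regular_splitting_matpow_tendsto_zero[OF K U split assms(5,6)] \<open>0 < m\<close>
    by (simp add: invertible_mult invertible_one_minus_matpow invertible_matrix_inv[OF invU])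
qed

lemma precond_inv_mono:
  assumes K: "proper_cone K"
    and FG: "K_weak_regular_splitting_II K U F G" and FGb: "K_weak_regular_splitting_II K U Fb Gb"
    and Finv: "K_ge K (matrix_inv F) (matrix_inv Fb)" and Hb: "K_nonneg K (matrix_inv Fb ** Gb)"
  shows "K_ge K (precond_inv F G m) (precond_inv Fb Gb m)"
proof (induction m)
  case 0
  show ?case by (simp add: precond_inv_def K_ge_def K_nonneg_zero[OF K])
next
  case (Suc m)
  let ?S = "precond_inv F G m" and ?Sb = "precond_inv Fb Gb m"
    and ?Fi = "matrix_inv F" and ?Fbi = "matrix_inv Fb" and ?H = "matpow (G ** matrix_inv F) m"
  have split: "U = F - G" "invertible F" and Hh: "K_nonneg K (G ** ?Fi)"
    using FG unfolding K_weak_regular_splitting_II_def by auto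
  have "U = Fb - Gb" "invertible Fb"
    using FGb unfolding K_weak_regular_splitting_II_def by auto
  then have "?Fbi ** Gb = mat 1 - ?Fbi ** U"
    by (simp add: matrix_sub_ldistrib matrix_inv_left)
  then have HbS: "?Fbi ** Gb ** ?S = ?S - (?Fbi - ?Fbi ** ?H)"
    by (simp add: matrix_sub_rdistrib matrix_sub_ldistrib splitting_mult_precond_inv[OF split]
        flip: matrix_mul_assoc)
  have "precond_inv F G (Suc m) - precond_inv Fb Gb (Suc m)
      = ?Fbi ** Gb ** (?S - ?Sb) + (?Fi - ?Fbi) ** ?H"
    unfolding precond_inv_Suc[of F G] precond_inv_Suc_left[of Fb Gb] matrix_sub_ldistrib
      matrix_sub_rdistrib HbS
    by (simp add: algebra_simps)
  then show ?case
    using Suc Finv Hb Hh unfolding K_ge_def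
    by (simp add: K_nonneg_add[OF K] K_nonneg_mult K_nonneg_matpow)
qed

lemma two_stage_iteration_eq:
  assumes "U = F - G" "invertible F"
  shows "matpow (matrix_inv F ** G) s + (\<Sum>j<s. matpow (matrix_inv F ** G) j ** matrix_inv F ** V)
    = mat 1 - precond_inv F G s ** (U - V)"
proof -
  have "(\<Sum>j<s. matpow (matrix_inv F ** G) j ** matrix_inv F ** V) = precond_inv F G s ** V"
    unfolding precond_inv_def matrix_sum_rdistrib ..
  then show ?thesis
    by (simp add: matrix_sub_ldistrib precond_inv_mult_splitting[OF assms])
qed

lemma two_stage_iteration_transposed_eq:
  assumes "U = F - G" "invertible F" and comm: "V ** matrix_inv F ** G = G ** matrix_inv F ** V"
  shows "matpow (G ** matrix_inv F) s + (\<Sum>j<s. matpow (G ** matrix_inv F) j ** V ** matrix_inv F)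
    = mat 1 - (U - V) ** precond_inv F G s"
proof -
  let ?Fi = "matrix_inv F"
  have "(G ** ?Fi) ** (V ** ?Fi) = (V ** ?Fi) ** (G ** ?Fi)"
    by (simp add: matrix_mul_assoc comm)
  then have "matpow (G ** ?Fi) j ** (V ** ?Fi) = (V ** ?Fi) ** matpow (G ** ?Fi) j" for j
    by (rule matpow_intertwine)
  then have "V ** precond_inv F G s = (\<Sum>j<s. matpow (G ** ?Fi) j ** V ** ?Fi)"
    unfolding precond_inv_alt matrix_sum_ldistrib by (simp add: matrix_mul_assoc)
  then show ?thesis
    by (simp add: matrix_sub_rdistrib splitting_mult_precond_inv[OF assms(1,2)])
qed

lemma K_nonneg_one_minus_mult_precond_inv:
  assumes K: "proper_cone K" and FG: "K_weak_regular_splitting_II K U F G" and V: "K_nonneg K V"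
  shows "K_nonneg K (mat 1 - (U - V) ** precond_inv F G s)"
proof -
  have split: "U = F - G" "invertible F" and Hh: "K_nonneg K (G ** matrix_inv F)"
    using FG unfolding K_weak_regular_splitting_II_def by auto
  have "mat 1 - (U - V) ** precond_inv F G s = matpow (G ** matrix_inv F) s + V ** precond_inv F G s"
    by (simp add: matrix_sub_rdistrib splitting_mult_precond_inv[OF split])
  then show ?thesis
    using K_nonneg_precond_inv[OF K FG] V Hh
    by (simp add: K_nonneg_add[OF K] K_nonneg_mult K_nonneg_matpow)
qed

lemma K_regular_splitting_precond:
  assumes K: "proper_cone K" and A: "K_monotone K A" and U: "K_monotone K U" and AUV: "A = U - V"
    and FG: "K_weak_regular_splitting_II K U F G"
    and comm: "V ** matrix_inv F ** G = G ** matrix_inv F ** V"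
    and H: "K_nonneg K (matrix_inv F ** G)"
    and transposed: "K_nonneg K
      ((matpow (G ** matrix_inv F) s + (\<Sum>j<s. matpow (G ** matrix_inv F) j ** V ** matrix_inv F))
        ** matrix_inv (precond_inv F G s))"
    and s: "0 < s"
  shows "K_regular_splitting K A (matrix_inv (precond_inv F G s)) (matrix_inv (precond_inv F G s) - A)"
proof -
  let ?S = "precond_inv F G s"
  have split: "U = F - G" "invertible F" "K_nonneg K (matrix_inv F)"
    using FG unfolding K_weak_regular_splitting_II_def by auto
  have invS: "invertible ?S" by (rule invertible_precond_inv[OF K U split H s])
  have "(mat 1 - A ** ?S) ** matrix_inv ?S = matrix_inv ?S - A"
    by (simp add: matrix_sub_rdistrib matrix_inv_right[OF invS] flip: matrix_mul_assoc)
  then have "K_nonneg K (matrix_inv ?S - A)"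
    using transposed by (simp add: two_stage_iteration_transposed_eq[OF split(1,2) comm] AUV)
  then show ?thesis
    unfolding K_regular_splitting_def using invS K_nonneg_precond_inv[OF K FG]
    by (simp add: invertible_matrix_inv matrix_inv_matrix_inv)
qed

lemma spectral_radius_le_if_precond_ge:
  assumes K: "proper_cone K" and A: "K_monotone K A"
    and X: "K_nonneg K (mat 1 - A ** S)" and T: "K_nonneg K (mat 1 - Sb ** A)"
    and SSb: "K_ge K S Sb"
  shows "spectral_radius (mat 1 - S ** A) \<le> spectral_radius (mat 1 - Sb ** A)"
proof -
  have invA: "invertible A" and Ainv: "K_nonneg K (matrix_inv A)"
    using A unfolding K_monotone_def by auto
  have "eigenvalues_C (mat 1 - S ** A) = eigenvalues_C (mat 1 - A ** S)"
    by (rule eigenvalues_C_similar[OF invA])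
      (simp add: matrix_sub_ldistrib matrix_sub_rdistrib matrix_mul_assoc)
  then have "spectral_radius (mat 1 - S ** A) = spectral_radius (mat 1 - A ** S)"
    by (simp add: Defs.spectral_radius_def)
  also have "\<dots> \<le> spectral_radius (mat 1 - Sb ** A)"
  proof (rule spectral_radius_le_if_K_dominated[OF K invertible_matrix_inv[OF invA] Ainv X T])
    have "(mat 1 - Sb ** A) ** matrix_inv A = matrix_inv A - Sb"
      by (simp add: matrix_sub_rdistrib matrix_inv_right[OF invA] flip: matrix_mul_assoc)
    moreover have "matrix_inv A ** (mat 1 - A ** S) = matrix_inv A - S"
      by (simp add: matrix_sub_ldistrib matrix_inv_left[OF invA] matrix_mul_assoc)
    ultimately show "K_ge K ((mat 1 - Sb ** A) ** matrix_inv A) (matrix_inv A ** (mat 1 - A ** S))"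
      using SSb by (simp add: K_ge_def)
  qed
  finally show ?thesis .
qed

theorem theorem3p11:
  fixes K :: "(real ^ 'n) set"
    and A U V F G Fb Gb :: "real ^ 'n ^ 'n"
    and s :: nat
  assumes K: "proper_cone K"
    and Amon: "K_monotone K A"
    and regUV: "K_regular_splitting K A U V"
    and wFG: "K_weak_regular_splitting_II K U F G"
    and wFGb: "K_weak_regular_splitting_II K U Fb Gb"
    and comm1: "V ** matrix_inv F ** G = G ** matrix_inv F ** V"
    and comm2: "V ** matrix_inv Fb ** Gb = Gb ** matrix_inv Fb ** V"
    and hi: "\<forall>t::nat. 0 < t \<longrightarrow>
       K_nonneg K
        ((matpow (Gb ** matrix_inv Fb) t
           + (\<Sum>j<t. matpow (Gb ** matrix_inv Fb) j ** V ** matrix_inv Fb))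
         ** matrix_inv (\<Sum>j<t. matpow (matrix_inv Fb ** Gb) j ** matrix_inv Fb))"
    and hii: "K_ge K (matrix_inv F) (matrix_inv Fb)"
    and hiii: "K_nonneg K (matrix_inv Fb ** Gb)"
    and s: "0 < s"
  shows "spectral_radius
           (matpow (matrix_inv F ** G) s
             + (\<Sum>j<s. matpow (matrix_inv F ** G) j ** matrix_inv F ** V))
         \<le> spectral_radius
           (matpow (matrix_inv Fb ** Gb) s
             + (\<Sum>j<s. matpow (matrix_inv Fb ** Gb) j ** matrix_inv Fb ** V))
       \<and> spectral_radius
           (matpow (matrix_inv Fb ** Gb) s
             + (\<Sum>j<s. matpow (matrix_inv Fb ** Gb) j ** matrix_inv Fb ** V)) < 1"
proof -
  let ?S = "precond_inv F G s" and ?Sb = "precond_inv Fb Gb s"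
  have AUV: "A = U - V" and U: "K_monotone K U" and V: "K_nonneg K V"
    using regUV unfolding K_regular_splitting_def K_monotone_def by auto
  have split: "U = F - G" "invertible F"
    and splitb: "U = Fb - Gb" "invertible Fb" "K_nonneg K (matrix_inv Fb)"
    using wFG wFGb unfolding K_weak_regular_splitting_II_def by auto
  have invSb: "invertible ?Sb" by (rule invertible_precond_inv[OF K U splitb hiii s])
  have reg: "K_regular_splitting K A (matrix_inv ?Sb) (matrix_inv ?Sb - A)"
    using hi[rule_format, OF s] unfolding precond_inv_def[symmetric]
    by (rule K_regular_splitting_precond[OF K Amon U AUV wFGb comm2 hiii _ s])
  have Tb: "mat 1 - ?Sb ** A = matrix_inv (matrix_inv ?Sb) ** (matrix_inv ?Sb - A)"
    by (simp add: matrix_inv_matrix_inv[OF invSb] matrix_sub_ldistrib matrix_inv_right[OF invSb])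
  have "spectral_radius (mat 1 - ?Sb ** A) < 1"
    unfolding Tb by (rule K_regular_splitting_spectral_radius_less_1[OF K Amon reg])
  moreover have "spectral_radius (mat 1 - ?S ** A) \<le> spectral_radius (mat 1 - ?Sb ** A)"
  proof (rule spectral_radius_le_if_precond_ge[OF K Amon])
    show "K_nonneg K (mat 1 - A ** ?S)"
      using K_nonneg_one_minus_mult_precond_inv[OF K wFG V] AUV by simp
    show "K_nonneg K (mat 1 - ?Sb ** A)"
      using reg unfolding Tb K_regular_splitting_def by (blast intro: K_nonneg_mult)
    show "K_ge K ?S ?Sb" by (rule precond_inv_mono[OF K wFG wFGb hii hiii])
  qed
  ultimately show ?thesis
    unfolding two_stage_iteration_eq[OF split] two_stage_iteration_eq[OF splitb(1,2)] AUV[symmetric]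
    by simp
qed

end
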